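(* Let $(\mathcal F_n)_{n\ge1}$ be a nested sequence of predictor classes such that for every $n$ and every $f_1,f_2\in\mathcal F_n$, the midpoint predictor $\tfrac12(f_1+f_2)$ lies in $\mathcal F_{2n}$. Fix $n\ge1$ and suppose $f_1,f_2\in\mathcal F_n$ satisfy $\mathrm{MSE}(f_i)\le R(\mathcal F_n)+\varepsilon$ for $i\in\{1,2\}$. Then \[ D(f_1,f_2)\le4\big(R(\mathcal F_n)-R(\mathcal F_{2n})+\varepsilon\big). \]
   Context: $P$ is a distribution on $\mathcal X\times\mathcal Y$ with $\mathcal Y\subseteq\mathbb R$; predictors are square-integrable functions $\mathcal X\to\mathbb R$; expectations over $(x,y)\sim P$. $\mathrm{MSE}(f)=\mathbb E[(y-f(x))^2]$, $R(\mathcal F)=\inf_{f\in\mathcal F}\mathrm{MSE}(f)$, $D(f_1,f_2)=\mathbb E[(f_1(x)-f_2(x))^2]$. Nested means $\mathcal F_n\subseteq\mathcal F_{n+1}$. *)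

theory Defs
  imports "HOL-Probability.Probability"
begin

definition predictor :: "('x \<times> real) measure \<Rightarrow> ('x \<Rightarrow> real) \<Rightarrow> bool" where
  "predictor P f \<longleftrightarrow> (\<lambda>z. f (fst z)) \<in> borel_measurable P
     \<and> integrable P (\<lambda>z. (f (fst z))\<^sup>2)"

definition MSE :: "('x \<times> real) measure \<Rightarrow> ('x \<Rightarrow> real) \<Rightarrow> real" where
  "MSE P f = (\<integral>z. (snd z - f (fst z))\<^sup>2 \<partial>P)"

definition risk :: "('x \<times> real) measure \<Rightarrow> ('x \<Rightarrow> real) set \<Rightarrow> real" where
  "risk P F = (INF f\<in>F. MSE P f)"

definition Dist :: "('x \<times> real) measure \<Rightarrow> ('x \<Rightarrow> real) \<Rightarrow> ('x \<Rightarrow> real) \<Rightarrow> real" where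
  "Dist P f1 f2 = (\<integral>z. (f1 (fst z) - f2 (fst z))\<^sup>2 \<partial>P)"

end

theory Submission
  imports Defs
begin

text \<open>Pointwise, the residual of the midpoint g = (f1 + f2)/2 satisfies the parallelogram identity
  (y - g x)^2 = (y - f1 x)^2/2 + (y - f2 x)^2/2 - (f1 x - f2 x)^2/4.
  Integrating gives MSE g = (MSE f1 + MSE f2)/2 - D(f1, f2)/4. Since g lies in the class
  of index 2n, R(F 2n) \<le> MSE g, and each MSE fi is at most R(F n) + \<epsilon>; rearranging gives the bound.\<close>

lemma integrable_square_diff:
  fixes a b :: "'z \<Rightarrow> real"
  assumes "a \<in> borel_measurable M" "b \<in> borel_measurable M"
    and "integrable M (\<lambda>z. (a z)\<^sup>2)" "integrable M (\<lambda>z. (b z)\<^sup>2)"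
  shows "integrable M (\<lambda>z. (a z - b z)\<^sup>2)"
proof (rule Bochner_Integration.integrable_bound)
  show "integrable M (\<lambda>z. 2 * (a z)\<^sup>2 + 2 * (b z)\<^sup>2)"
    using assms by auto
  show "(\<lambda>z. (a z - b z)\<^sup>2) \<in> borel_measurable M"
    using assms by measurable
  have "(a z - b z)\<^sup>2 \<le> 2 * (a z)\<^sup>2 + 2 * (b z)\<^sup>2" for z
    using zero_le_power2[of "a z + b z"] by (simp add: power2_eq_square algebra_simps)
  then show "AE z in M. norm ((a z - b z)\<^sup>2) \<le> norm (2 * (a z)\<^sup>2 + 2 * (b z)\<^sup>2)"
    by simp
qed

lemma predictor_integrable_residual:
  assumes "predictor P f" "snd \<in> borel_measurable P" "integrable P (\<lambda>z. (snd z)\<^sup>2)"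
  shows "integrable P (\<lambda>z. (snd z - f (fst z))\<^sup>2)"
  using assms by (intro integrable_square_diff) (auto simp: predictor_def)

lemma predictor_integrable_Dist:
  assumes "predictor P f1" "predictor P f2"
  shows "integrable P (\<lambda>z. (f1 (fst z) - f2 (fst z))\<^sup>2)"
  using assms by (intro integrable_square_diff) (auto simp: predictor_def)

lemma MSE_midpoint:
  assumes "predictor P f1" "predictor P f2"
    and "snd \<in> borel_measurable P" "integrable P (\<lambda>z. (snd z)\<^sup>2)"
  shows "MSE P (\<lambda>x. (f1 x + f2 x) / 2) = MSE P f1 / 2 + MSE P f2 / 2 - Dist P f1 f2 / 4"
proof -
  have parallelogram: "(\<lambda>z. (snd z - (f1 (fst z) + f2 (fst z)) / 2)\<^sup>2) =
      (\<lambda>z. (snd z - f1 (fst z))\<^sup>2 / 2 + (snd z - f2 (fst z))\<^sup>2 / 2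
        - (f1 (fst z) - f2 (fst z))\<^sup>2 / 4)"
    by (rule ext) (simp add: power2_eq_square field_simps)
  have "integrable P (\<lambda>z. (snd z - f1 (fst z))\<^sup>2)" "integrable P (\<lambda>z. (snd z - f2 (fst z))\<^sup>2)"
    using assms by (auto intro: predictor_integrable_residual)
  moreover have "integrable P (\<lambda>z. (f1 (fst z) - f2 (fst z))\<^sup>2)"
    using assms(1,2) by (rule predictor_integrable_Dist)
  ultimately show ?thesis
    unfolding MSE_def Dist_def parallelogram by simp
qed

lemma risk_le_MSE:
  assumes "f \<in> F"
  shows "risk P F \<le> MSE P f"
  unfolding risk_def
proof (rule cINF_lower[OF _ assms])
  show "bdd_below (MSE P ` F)"
    by (rule bdd_belowI[where m = 0]) (auto simp: MSE_def)
qed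

theorem lemma2:
  fixes P :: "('x \<times> real) measure"
    and F :: "nat \<Rightarrow> ('x \<Rightarrow> real) set"
    and n :: nat and f1 f2 :: "'x \<Rightarrow> real" and \<epsilon> :: real
  assumes "prob_space P"
    and "snd \<in> borel_measurable P"
    and "integrable P (\<lambda>z. (snd z)\<^sup>2)"
    and "\<And>m f. m \<ge> 1 \<Longrightarrow> f \<in> F m \<Longrightarrow> predictor P f"
    and "\<And>m. m \<ge> 1 \<Longrightarrow> F m \<subseteq> F (Suc m)"
    and "\<And>m g1 g2. m \<ge> 1 \<Longrightarrow> g1 \<in> F m \<Longrightarrow> g2 \<in> F m \<Longrightarrow>
           (\<lambda>x. (g1 x + g2 x) / 2) \<in> F (2 * m)"
    and "n \<ge> 1"
    and "f1 \<in> F n" and "f2 \<in> F n"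
    and "MSE P f1 \<le> risk P (F n) + \<epsilon>"
    and "MSE P f2 \<le> risk P (F n) + \<epsilon>"
  shows "Dist P f1 f2 \<le> 4 * (risk P (F n) - risk P (F (2 * n)) + \<epsilon>)"
proof -
  have "predictor P f1" "predictor P f2"
    using assms(4,7-9) by auto
  then have "MSE P (\<lambda>x. (f1 x + f2 x) / 2) = MSE P f1 / 2 + MSE P f2 / 2 - Dist P f1 f2 / 4"
    using MSE_midpoint assms(2,3) by blast
  moreover have "risk P (F (2 * n)) \<le> MSE P (\<lambda>x. (f1 x + f2 x) / 2)"
    using assms(6-9) by (intro risk_le_MSE) blast
  ultimately have "Dist P f1 f2 / 4 \<le> risk P (F n) - risk P (F (2 * n)) + \<epsilon>"
    using assms(10,11) by linarith
  then show ?thesis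
    by simp
qed

end
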